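(* Consider the equation $x'(t)+p(t)\,x(\tau(t))=0$, $t\ge t_0$, where $p,\tau:[t_0,\infty)\to[0,\infty)$ are continuous, $\tau(t)\le t$ and $\lim_{t\to\infty}\tau(t)=\infty$. Assume $\liminf_{t\to\infty}\int_{\tau(t)}^{t}p(s)\,ds=\beta\in(0,1/e]$ and let $\lambda^{*}$ be the smallest real root of $e^{\beta\lambda}=\lambda$. Let $\sigma:[t_0,\infty)\to\mathbb{R}$ be continuous and non-decreasing with $\tau(t)\le\sigma(t)\le t$ for $t\ge t_0$. If $$\limsup_{\varepsilon\to0+}\Bigg(\limsup_{t\to+\infty}\int_{\sigma(t)}^{t}p(s)\exp\bigg(\int_{\tau(s)}^{\sigma(t)}(\lambda^{*}-\varepsilon)\,p(\xi)\,d\xi\bigg)ds\Bigg)>1,$$ then all solutions of this equation oscillate.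
   Context: A solution is a function $x\in C([T_0,\infty);\mathbb{R})$ for some $T_0\ge t_0$, continuously differentiable on $[\tau_{(-1)}(T_0),\infty)$ where $\tau_{(-1)}(t)=\sup\{s:\tau(s)\le t\}$, satisfying the equation for $t\ge\tau_{(-1)}(T_0)$. It is oscillatory if it has arbitrarily large zeros; "all solutions oscillate" means every solution is oscillatory. *)

theory Defs
  imports "HOL-Analysis.Analysis"
begin

definition oint :: "real \<Rightarrow> real \<Rightarrow> (real \<Rightarrow> real) \<Rightarrow> real" where
  "oint a b f = (if a \<le> b then integral {a..b} f else - integral {b..a} f)"

definition tau_inv :: "(real \<Rightarrow> real) \<Rightarrow> real \<Rightarrow> real \<Rightarrow> real" where
  "tau_inv \<tau> t0 T = Sup {s. t0 \<le> s \<and> \<tau> s \<le> T}"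

definition is_solution ::
  "(real \<Rightarrow> real) \<Rightarrow> (real \<Rightarrow> real) \<Rightarrow> real \<Rightarrow> (real \<Rightarrow> real) \<Rightarrow> bool" where
  "is_solution p \<tau> t0 x \<longleftrightarrow>
     (\<exists>T0 x'. t0 \<le> T0 \<and> continuous_on {T0..} x \<and>
        continuous_on {tau_inv \<tau> t0 T0..} x' \<and>
        (\<forall>t \<ge> tau_inv \<tau> t0 T0.
            (x has_real_derivative x' t) (at t within {tau_inv \<tau> t0 T0..}) \<and>
            x' t + p t * x (\<tau> t) = 0))"

definition oscillatory :: "(real \<Rightarrow> real) \<Rightarrow> bool" where
  "oscillatory x \<longleftrightarrow> (\<forall>T. \<exists>t \<ge> T. x t = 0)"

end

theory Submission
  imports Defs
begin

text \<open>Suppose a solution \<open>x\<close> is eventually positive. Integrating \<open>(ln x)' = -p x(\<tau>)/x\<close> shows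
  that a bound \<open>x(\<tau> t) \<ge> a x(t)\<close> improves to \<open>x(\<tau> t) \<ge> exp (a b) x(t)\<close> for every \<open>b < \<beta>\<close>.
  The set of admissible \<open>a\<close> is therefore closed under \<open>a \<mapsto> exp (a b)\<close>, and its supremum \<open>L\<close>
  satisfies \<open>exp (\<beta> L) \<le> L\<close>; if \<open>L < \<lambda>\<^sup>*\<close> this would produce a root of \<open>exp (\<beta> l) = l\<close>
  below the least one. Hence \<open>x(\<tau> s) \<ge> x(\<sigma> t) exp ((\<lambda>\<^sup>* - \<epsilon>) P(\<tau> s, \<sigma> t))\<close>, where \<open>P(u, v)\<close>
  is the integral of \<open>p\<close> over \<open>[u, v]\<close>. Inserting this into
  \<open>x(\<sigma> t) - x(t) = \<integral> p(s) x(\<tau> s) ds\<close> over \<open>[\<sigma> t, t]\<close> bounds the integral in the hypothesis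
  by 1 for every \<open>\<epsilon> > 0\<close>, a contradiction. Eventually negative solutions are handled via \<open>-x\<close>.\<close>

lemma exp_closed_set_contains_below_least_root:
  fixes A :: "real set" and \<beta> lam c :: real
  assumes zero: "0 \<in> A"
      and down: "\<And>a a'. a \<in> A \<Longrightarrow> a' \<le> a \<Longrightarrow> a' \<in> A"
      and exp_closed: "\<And>a b. a \<in> A \<Longrightarrow> 0 \<le> a \<Longrightarrow> b < \<beta> \<Longrightarrow> exp (a * b) \<in> A"
      and lam_least: "\<And>l. exp (\<beta> * l) = l \<Longrightarrow> lam \<le> l"
      and "c < lam"
  shows "c \<in> A"
proof (rule ccontr)
  assume "c \<notin> A"
  then have bound: "a < c" if "a \<in> A" for a
    using down that by (meson not_less)
  have bdd: "bdd_above A"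
    using bound by (auto intro!: bdd_aboveI[of _ c] less_imp_le)
  define L where "L = Sup A"
  have "1 \<in> A" \<comment> \<open>so that \<open>L - h \<ge> 0\<close> below, as \<open>exp_closed\<close> requires\<close>
    using exp_closed[OF zero, of "\<beta> - 1"] by simp
  then have L_ge_1: "1 \<le> L"
    unfolding L_def by (rule cSup_upper[OF _ bdd])
  have L_le: "L \<le> c"
    unfolding L_def using zero bound by (intro cSup_least) (auto intro: less_imp_le)
  have below_L: "exp ((L - h) * (\<beta> - h)) \<le> L" if "0 < h" "h < L" for h
  proof -
    obtain a where "a \<in> A" "L - h < a"
      using less_cSup_iff[of A "L - h"] zero bdd \<open>0 < h\<close> by (auto simp: L_def)
    then have "L - h \<in> A" using down by simp
    then have "exp ((L - h) * (\<beta> - h)) \<in> A"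
      using exp_closed \<open>0 < h\<close> \<open>h < L\<close> by simp
    then show ?thesis unfolding L_def by (rule cSup_upper[OF _ bdd])
  qed
  have "((\<lambda>h. exp ((L - h) * (\<beta> - h))) \<longlongrightarrow> exp ((L - 0) * (\<beta> - 0))) (at_right 0)"
    by (intro tendsto_intros)
  moreover have "eventually (\<lambda>h. exp ((L - h) * (\<beta> - h)) \<le> L) (at_right 0)"
    using L_ge_1 by (intro eventually_at_rightI[of 0 L]) (auto intro: below_L)
  ultimately have "exp ((L - 0) * (\<beta> - 0)) \<le> L"
    by (intro tendsto_le[OF _ tendsto_const]) auto
  then have "exp (\<beta> * L) \<le> L"
    by (simp add: mult.commute)
  then have "\<exists>l. 0 \<le> l \<and> l \<le> L \<and> exp (\<beta> * l) - l = 0"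
    using L_ge_1 by (intro IVT2') (auto intro!: continuous_intros)
  then obtain l where "l \<le> L" "exp (\<beta> * l) = l"
    by auto
  then show False
    using lam_least[of l] L_le \<open>c < lam\<close> by simp
qed

locale positive_solution =
  fixes p \<tau> x x' :: "real \<Rightarrow> real" and T :: real
  assumes p_cont: "continuous_on {T..} p"
      and p_nonneg: "\<And>t. T \<le> t \<Longrightarrow> 0 \<le> p t"
      and tau_le: "\<And>t. T \<le> t \<Longrightarrow> \<tau> t \<le> t"
      and tau_lim: "filterlim \<tau> at_top at_top"
      and deriv: "\<And>t. T \<le> t \<Longrightarrow> (x has_real_derivative x' t) (at t within {T..})"
      and equation: "\<And>t. T \<le> t \<Longrightarrow> x' t + p t * x (\<tau> t) = 0"
      and pos: "\<And>t. T \<le> t \<Longrightarrow> 0 < x t"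
begin

lemma eventually_tau_ge: "eventually (\<lambda>t. B \<le> \<tau> t) at_top"
  using tau_lim by (simp add: filterlim_at_top)

lemma has_integral_delay_term:
  assumes "T \<le> u" "u \<le> v"
  shows "((\<lambda>s. p s * x (\<tau> s)) has_integral x u - x v) {u..v}"
proof -
  have "(x has_vector_derivative x' s) (at s within {u..v})" if "s \<in> {u..v}" for s
  proof -
    have "(x has_real_derivative x' s) (at s within {u..v})"
      by (rule DERIV_subset[OF deriv]) (use that assms in auto)
    then show ?thesis
      by (simp add: has_real_derivative_iff_has_vector_derivative)
  qed
  then have "(x' has_integral x v - x u) {u..v}"
    by (rule fundamental_theorem_of_calculus[OF \<open>u \<le> v\<close>])
  then have "((\<lambda>s. - x' s) has_integral - (x v - x u)) {u..v}"
    by (rule has_integral_neg)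
  then have "((\<lambda>s. p s * x (\<tau> s)) has_integral - (x v - x u)) {u..v}"
    by (rule has_integral_eq[rotated]) (use equation assms in \<open>auto simp: add_eq_0_iff\<close>)
  then show ?thesis
    by simp
qed

text \<open>The logarithmic derivative of \<open>x\<close> is \<open>-p x(\<tau>)/x \<le> -a p\<close> on \<open>[u, v]\<close>.\<close>
lemma exp_integral_le_ratio:
  assumes "T \<le> u" "u \<le> v" and ratio: "\<And>r. r \<in> {u..v} \<Longrightarrow> a * x r \<le> x (\<tau> r)"
  shows "x v * exp (a * integral {u..v} p) \<le> x u"
proof -
  have "((\<lambda>r. ln (x r)) has_vector_derivative - (p r * x (\<tau> r) / x r)) (at r within {u..v})"
    if "r \<in> {u..v}" for r
  proof -
    have "(x has_real_derivative x' r) (at r within {u..v})"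
      by (rule DERIV_subset[OF deriv]) (use that assms(1) in auto)
    then have "((\<lambda>r. ln (x r)) has_real_derivative 1 / x r * x' r) (at r within {u..v})"
      using pos[of r] that assms(1) by (intro DERIV_chain2[OF DERIV_ln_divide]) auto
    moreover have "x' r = - (p r * x (\<tau> r))"
      using equation[of r] that assms(1) by (simp add: eq_neg_iff_add_eq_0)
    ultimately show ?thesis
      by (simp add: has_real_derivative_iff_has_vector_derivative)
  qed
  then have "((\<lambda>r. - (p r * x (\<tau> r) / x r)) has_integral ln (x v) - ln (x u)) {u..v}"
    by (rule fundamental_theorem_of_calculus[OF \<open>u \<le> v\<close>])
  moreover have "((\<lambda>r. - (a * p r)) has_integral - (a * integral {u..v} p)) {u..v}"
  proof -
    have "p integrable_on {u..v}"
      by (rule integrable_continuous_interval, rule continuous_on_subset[OF p_cont])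
        (use assms(1) in auto)
    then show ?thesis
      by (intro has_integral_neg has_integral_mult_right) (simp add: has_integral_integral)
  qed
  moreover have "- (p r * x (\<tau> r) / x r) \<le> - (a * p r)" if "r \<in> {u..v}" for r
  proof -
    have "p r * (a * x r) \<le> p r * x (\<tau> r)"
      using ratio[OF that] p_nonneg[of r] that assms(1) by (auto intro: mult_left_mono)
    then show ?thesis
      using pos[of r] that assms(1) by (simp add: field_simps)
  qed
  ultimately have "ln (x v) - ln (x u) \<le> - (a * integral {u..v} p)"
    by (rule has_integral_le)
  then have "exp (ln (x v) + a * integral {u..v} p) \<le> exp (ln (x u))"
    by simp
  then show ?thesis
    using pos[of u] pos[of v] assms by (simp add: exp_add)
qed


definition ratio_lower_bound :: "real \<Rightarrow> bool" where
  "ratio_lower_bound a \<longleftrightarrow> eventually (\<lambda>t. a * x t \<le> x (\<tau> t)) at_top"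

lemma ratio_lower_boundE:
  assumes "ratio_lower_bound a"
  obtains N where "T \<le> N" "\<And>r. N \<le> r \<Longrightarrow> a * x r \<le> x (\<tau> r)"
proof -
  obtain N where N: "\<And>r. N \<le> r \<Longrightarrow> a * x r \<le> x (\<tau> r)"
    using assms unfolding ratio_lower_bound_def eventually_at_top_linorder by blast
  show thesis
    using that[of "max T N"] N by simp
qed

lemma ratio_lower_bound_zero: "ratio_lower_bound 0"
  unfolding ratio_lower_bound_def
  using eventually_tau_ge[of T] by eventually_elim (simp add: less_imp_le pos)

lemma ratio_lower_bound_antimono:
  assumes "ratio_lower_bound a" "a' \<le> a"
  shows "ratio_lower_bound a'"
  using assms(1) eventually_ge_at_top[of T] unfolding ratio_lower_bound_def
proof eventually_elim
  case (elim t)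
  then have "a' * x t \<le> a * x t"
    using assms(2) pos by (simp add: mult_right_mono)
  with elim show ?case by simp
qed

lemma ratio_lower_bound_exp:
  assumes "ratio_lower_bound a" "0 \<le> a"
      and "ereal b < Liminf at_top (\<lambda>t. ereal (integral {\<tau> t..t} p))"
  shows "ratio_lower_bound (exp (a * b))"
proof -
  obtain N where N: "T \<le> N" "\<And>r. N \<le> r \<Longrightarrow> a * x r \<le> x (\<tau> r)"
    using ratio_lower_boundE[OF assms(1)] by blast
  have "eventually (\<lambda>t. ereal b < ereal (integral {\<tau> t..t} p)) at_top"
    using assms(3) by (rule less_LiminfD)
  then show ?thesis
    using eventually_tau_ge[of N] eventually_ge_at_top[of T] unfolding ratio_lower_bound_def
  proof eventually_elim
    case (elim t)
    have "x t * exp (a * integral {\<tau> t..t} p) \<le> x (\<tau> t)"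
      using elim N tau_le[of t] by (intro exp_integral_le_ratio) auto
    moreover have "exp (a * b) \<le> exp (a * integral {\<tau> t..t} p)"
      using elim \<open>0 \<le> a\<close> by (simp add: mult_left_mono)
    then have "exp (a * b) * x t \<le> exp (a * integral {\<tau> t..t} p) * x t"
      using pos[of t] elim by (simp add: mult_right_mono)
    ultimately show ?case
      by (simp add: mult.commute)
  qed
qed

lemma ratio_lower_bound_below_least_root:
  assumes beta: "Liminf at_top (\<lambda>t. ereal (integral {\<tau> t..t} p)) = ereal \<beta>"
      and lam_least: "\<And>l. exp (\<beta> * l) = l \<Longrightarrow> lam \<le> l"
      and "c < lam"
  shows "ratio_lower_bound c"
proof -
  have "c \<in> Collect ratio_lower_bound"
  proof (rule exp_closed_set_contains_below_least_root[OF _ _ _ lam_least \<open>c < lam\<close>])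
    show "exp (a * b) \<in> Collect ratio_lower_bound"
      if "a \<in> Collect ratio_lower_bound" "0 \<le> a" "b < \<beta>" for a b
      using that by (intro CollectI ratio_lower_bound_exp) (simp_all add: beta)
  qed (auto intro: ratio_lower_bound_zero ratio_lower_bound_antimono)
  then show ?thesis
    by simp
qed

lemma weighted_integral_le_1:
  assumes "T \<le> N" "\<And>r. N \<le> r \<Longrightarrow> c * x r \<le> x (\<tau> r)"
      and "u \<le> v" "\<And>s. s \<in> {u..v} \<Longrightarrow> N \<le> \<tau> s \<and> \<tau> s \<le> u"
  shows "integral {u..v} (\<lambda>s. p s * exp (c * integral {\<tau> s..u} p)) \<le> 1"
proof -
  define h where "h s = p s * exp (c * integral {\<tau> s..u} p)" for s
  have "T \<le> u"
    using assms(1,3) assms(4)[of u] by auto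
  have h_le: "x u * h s \<le> p s * x (\<tau> s)" if "s \<in> {u..v}" for s
  proof -
    have "x u * exp (c * integral {\<tau> s..u} p) \<le> x (\<tau> s)"
      using assms(1,2) assms(4)[of s] that by (intro exp_integral_le_ratio) auto
    then show ?thesis
      unfolding h_def using p_nonneg[of s] \<open>T \<le> u\<close> that
      by (simp add: mult.left_commute mult_left_mono)
  qed
  show ?thesis
  proof (cases "h integrable_on {u..v}")
    case True
    then have "((\<lambda>s. x u * h s) has_integral x u * integral {u..v} h) {u..v}"
      by (intro has_integral_mult_right) (simp add: has_integral_integral)
    then have "x u * integral {u..v} h \<le> x u - x v"
      using has_integral_delay_term[OF \<open>T \<le> u\<close> \<open>u \<le> v\<close>] h_le by (rule has_integral_le)
    then have "x u * integral {u..v} h \<le> x u * 1"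
      using pos[of v] \<open>T \<le> u\<close> \<open>u \<le> v\<close> by simp
    then show ?thesis
      using pos[of u] \<open>T \<le> u\<close> unfolding h_def by (simp add: mult_le_cancel_left_pos)
  next
    case False
    then show ?thesis
      unfolding h_def by (simp add: not_integrable_integral)
  qed
qed

lemma eventually_weighted_integral_le_1:
  assumes "ratio_lower_bound c" and sigma_mono: "mono_on {T..} \<sigma>"
      and sigma_ge: "\<And>t. T \<le> t \<Longrightarrow> \<tau> t \<le> \<sigma> t"
      and sigma_le: "\<And>t. T \<le> t \<Longrightarrow> \<sigma> t \<le> t"
  shows "eventually (\<lambda>t. integral {\<sigma> t..t}
           (\<lambda>s. p s * exp (oint (\<tau> s) (\<sigma> t) (\<lambda>\<xi>. c * p \<xi>))) \<le> 1) at_top"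
proof -
  obtain N where N: "T \<le> N" "\<And>r. N \<le> r \<Longrightarrow> c * x r \<le> x (\<tau> r)"
    using ratio_lower_boundE[OF assms(1)] by blast
  obtain N'' where "\<And>s. N'' \<le> s \<Longrightarrow> N \<le> \<tau> s"
    using eventually_tau_ge[of N] unfolding eventually_at_top_linorder by blast
  then obtain N' where N': "T \<le> N'" "\<And>s. N' \<le> s \<Longrightarrow> N \<le> \<tau> s"
    by (metis max.cobounded1 max.boundedE)
  show ?thesis
    using eventually_tau_ge[of N'] eventually_ge_at_top[of T]
  proof eventually_elim
    case (elim t)
    have tau_s: "N \<le> \<tau> s \<and> \<tau> s \<le> \<sigma> t" if "s \<in> {\<sigma> t..t}" for s
    proof -
      have "N' \<le> s"
        using that elim sigma_ge[of t] by auto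
      then have "\<sigma> s \<le> \<sigma> t"
        using that N'(1) by (auto intro: mono_onD[OF sigma_mono])
      then show ?thesis
        using N'(2)[of s] sigma_ge[of s] \<open>N' \<le> s\<close> N'(1) by auto
    qed
    have "integral {\<sigma> t..t} (\<lambda>s. p s * exp (oint (\<tau> s) (\<sigma> t) (\<lambda>\<xi>. c * p \<xi>)))
          = integral {\<sigma> t..t} (\<lambda>s. p s * exp (c * integral {\<tau> s..\<sigma> t} p))"
      using tau_s by (intro integral_cong) (simp add: oint_def)
    also have "\<dots> \<le> 1"
      using N sigma_le[of t] elim tau_s by (intro weighted_integral_le_1) auto
    finally show ?case .
  qed
qed

lemma limsup_weighted_integral_le_1:
  assumes beta: "Liminf at_top (\<lambda>t. ereal (integral {\<tau> t..t} p)) = ereal \<beta>"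
      and lam_least: "\<And>l. exp (\<beta> * l) = l \<Longrightarrow> lam \<le> l"
      and sigma_mono: "mono_on {T..} \<sigma>"
      and sigma_ge: "\<And>t. T \<le> t \<Longrightarrow> \<tau> t \<le> \<sigma> t"
      and sigma_le: "\<And>t. T \<le> t \<Longrightarrow> \<sigma> t \<le> t"
  shows "Limsup (at_right 0) (\<lambda>\<epsilon>. Limsup at_top (\<lambda>t. ereal
           (integral {\<sigma> t..t} (\<lambda>s. p s *
              exp (oint (\<tau> s) (\<sigma> t) (\<lambda>\<xi>. (lam - \<epsilon>) * p \<xi>)))))) \<le> 1"
proof (rule Limsup_bounded)
  show "eventually (\<lambda>\<epsilon>. Limsup at_top (\<lambda>t. ereal (integral {\<sigma> t..t} (\<lambda>s. p s *
          exp (oint (\<tau> s) (\<sigma> t) (\<lambda>\<xi>. (lam - \<epsilon>) * p \<xi>))))) \<le> 1) (at_right 0)"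
    using eventually_at_right_less[of "0::real"]
  proof eventually_elim
    case (elim \<epsilon>)
    then have "ratio_lower_bound (lam - \<epsilon>)"
      using ratio_lower_bound_below_least_root[OF beta lam_least, of "lam - \<epsilon>"] by simp
    then show ?case
      using sigma_mono sigma_ge sigma_le
      by (intro Limsup_bounded) (auto elim!: eventually_mono dest!: eventually_weighted_integral_le_1)
  qed
qed

end

lemma continuous_nonzero_sign_cases:
  fixes f :: "real \<Rightarrow> real"
  assumes "continuous_on {a..} f" "\<And>t. a \<le> t \<Longrightarrow> f t \<noteq> 0"
  shows "(\<forall>t\<ge>a. 0 < f t) \<or> (\<forall>t\<ge>a. f t < 0)"
proof -
  have cont: "continuous_on {a..t} f" for t
    using assms(1) by (rule continuous_on_subset) auto
  have "0 < f t" if "0 < f a" "a \<le> t" for t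
  proof (rule ccontr)
    assume "\<not> 0 < f t"
    then obtain z where "a \<le> z" "f z = 0"
      using IVT2'[of f t 0 a, OF _ _ \<open>a \<le> t\<close> cont] \<open>0 < f a\<close> by auto
    with assms(2) show False by blast
  qed
  moreover have "f t < 0" if "f a < 0" "a \<le> t" for t
  proof (rule ccontr)
    assume "\<not> f t < 0"
    then obtain z where "a \<le> z" "f z = 0"
      using IVT'[of f a 0 t, OF _ _ \<open>a \<le> t\<close> cont] \<open>f a < 0\<close> by auto
    with assms(2) show False by blast
  qed
  moreover have "0 < f a \<or> f a < 0"
    using assms(2)[of a] by linarith
  ultimately show ?thesis
    by blast
qed

lemma nonoscillatory_solution_eventually_positive:
  assumes "is_solution p \<tau> t0 x" "\<not> oscillatory x"
  obtains T y y' where "t0 \<le> T"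
    "\<And>t. T \<le> t \<Longrightarrow> (y has_real_derivative y' t) (at t within {T..})"
    "\<And>t. T \<le> t \<Longrightarrow> y' t + p t * y (\<tau> t) = 0"
    "\<And>t. T \<le> t \<Longrightarrow> 0 < y t"
proof -
  obtain T0 x' where "t0 \<le> T0" "continuous_on {T0..} x"
    and solves: "\<And>t. tau_inv \<tau> t0 T0 \<le> t \<Longrightarrow>
      (x has_real_derivative x' t) (at t within {tau_inv \<tau> t0 T0..}) \<and> x' t + p t * x (\<tau> t) = 0"
    using assms(1) unfolding is_solution_def by blast
  obtain Z where Z: "\<And>t. Z \<le> t \<Longrightarrow> x t \<noteq> 0"
    using assms(2) unfolding oscillatory_def by (meson not_le order.refl)
  define T where "T = max (max Z T0) (tau_inv \<tau> t0 T0)"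
  have "t0 \<le> T" "T0 \<le> T" "Z \<le> T"
    using \<open>t0 \<le> T0\<close> by (auto simp: T_def)
  have derivs: "(x has_real_derivative x' t) (at t within {T..})" "x' t + p t * x (\<tau> t) = 0"
    if "T \<le> t" for t
    using solves[of t] that by (auto simp: T_def intro: DERIV_subset)
  have "continuous_on {T..} x"
    by (rule continuous_on_subset[OF \<open>continuous_on {T0..} x\<close>]) (use \<open>T0 \<le> T\<close> in auto)
  then consider "\<And>t. T \<le> t \<Longrightarrow> 0 < x t" | "\<And>t. T \<le> t \<Longrightarrow> x t < 0"
    using continuous_nonzero_sign_cases[of T x] Z \<open>Z \<le> T\<close> by force
  then show thesis
  proof cases
    case 1
    with derivs show thesis
      using that[of T x x'] \<open>t0 \<le> T\<close> by blast
  next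
    case 2
    show thesis
    proof (rule that[of T "\<lambda>t. - x t" "\<lambda>t. - x' t"])
      fix t
      assume "T \<le> t"
      show "((\<lambda>t. - x t) has_real_derivative - x' t) (at t within {T..})"
        using derivs(1)[OF \<open>T \<le> t\<close>] by (rule DERIV_minus)
      show "- x' t + p t * - x (\<tau> t) = 0"
        using derivs(2)[OF \<open>T \<le> t\<close>] by simp
      show "0 < - x t"
        using 2 \<open>T \<le> t\<close> by simp
    qed fact
  qed
qed

theorem corollary3p2:
  fixes p \<tau> \<sigma> :: "real \<Rightarrow> real" and t0 \<beta> lam :: real
  assumes p_cont: "continuous_on {t0..} p"
      and tau_cont: "continuous_on {t0..} \<tau>"
      and p_nonneg: "\<And>t. t \<ge> t0 \<Longrightarrow> p t \<ge> 0"
      and tau_nonneg: "\<And>t. t \<ge> t0 \<Longrightarrow> \<tau> t \<ge> 0"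
      and tau_le: "\<And>t. t \<ge> t0 \<Longrightarrow> \<tau> t \<le> t"
      and tau_lim: "filterlim \<tau> at_top at_top"
      and beta: "Liminf at_top (\<lambda>t. ereal (integral {\<tau> t..t} p)) = ereal \<beta>"
      and beta_pos: "0 < \<beta>" and beta_le: "\<beta> \<le> exp (-1)"
      and lam_root: "exp (\<beta> * lam) = lam"
      and lam_least: "\<And>l. exp (\<beta> * l) = l \<Longrightarrow> lam \<le> l"
      and sigma_cont: "continuous_on {t0..} \<sigma>"
      and sigma_mono: "mono_on {t0..} \<sigma>"
      and sigma_ge: "\<And>t. t \<ge> t0 \<Longrightarrow> \<tau> t \<le> \<sigma> t"
      and sigma_le: "\<And>t. t \<ge> t0 \<Longrightarrow> \<sigma> t \<le> t"
      and cond: "Limsup (at_right 0) (\<lambda>\<epsilon>. Limsup at_top (\<lambda>t. ereal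
                   (integral {\<sigma> t..t} (\<lambda>s. p s *
                      exp (oint (\<tau> s) (\<sigma> t) (\<lambda>\<xi>. (lam - \<epsilon>) * p \<xi>)))))) > 1"
  shows "\<forall>x. is_solution p \<tau> t0 x \<longrightarrow> oscillatory x"
proof (intro allI impI)
  fix x
  assume "is_solution p \<tau> t0 x"
  show "oscillatory x"
  proof (rule ccontr)
    assume "\<not> oscillatory x"
    obtain T y y' where "t0 \<le> T"
      "\<And>t. T \<le> t \<Longrightarrow> (y has_real_derivative y' t) (at t within {T..})"
      "\<And>t. T \<le> t \<Longrightarrow> y' t + p t * y (\<tau> t) = 0" "\<And>t. T \<le> t \<Longrightarrow> 0 < y t"
      using nonoscillatory_solution_eventually_positive[OF \<open>is_solution p \<tau> t0 x\<close> \<open>\<not> oscillatory x\<close>]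
      by blast
    then interpret positive_solution p \<tau> y y' T
      using p_cont p_nonneg tau_le tau_lim by unfold_locales (auto intro: continuous_on_subset)
    have "Limsup (at_right 0) (\<lambda>\<epsilon>. Limsup at_top (\<lambda>t. ereal
            (integral {\<sigma> t..t} (\<lambda>s. p s *
               exp (oint (\<tau> s) (\<sigma> t) (\<lambda>\<xi>. (lam - \<epsilon>) * p \<xi>)))))) \<le> 1"
      using \<open>t0 \<le> T\<close> sigma_ge sigma_le
      by (intro limsup_weighted_integral_le_1[OF beta lam_least]
            mono_on_subset[OF sigma_mono]) auto
    with cond show False
      by simp
  qed
qed

end
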